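(* Let $n\ge 2$. If $\beta=(b_1,\dots,b_n)\in PF_{n,n-1}\setminus PF_{n,n-2}$, then $b_n=n$.
   Context: For $n\in\mathbb{N}$ let $[n]=\{1,\dots,n\}$ and $PP_n=[n]^n$. For an integer $k\ge 0$, the $k$-Naples parking rule: there are $n$ spots numbered $1,\dots,n$ west to east, initially empty; cars $c_1,\dots,c_n$ arrive in order, car $c_i$ preferring spot $b_i$. If spot $b_i$ is empty, $c_i$ parks there. Otherwise $c_i$ checks spots $b_i-1,\dots,b_i-k$ in this order (skipping those $<1$) and parks in the first empty one; if all are occupied, it drives east and parks in the first empty spot numbered greater than $b_i$, failing to park if none exists. $PF_{n,k}$ is the set of $\beta\in PP_n$ for which all cars park. *)

theory Defs
  imports Main
begin

definition PP :: "nat \<Rightarrow> nat list set" where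
  "PP n = {bs. length bs = n \<and> (\<forall>b\<in>set bs. b \<in> {1..n})}"

text \<open>One step of the k-Naples rule with n spots. The state is the set of occupied
 spots, or None if some car has failed to park.\<close>
definition naples_step :: "nat \<Rightarrow> nat \<Rightarrow> nat \<Rightarrow> nat set option \<Rightarrow> nat set option" where
  "naples_step n k b st = (case st of None \<Rightarrow> None | Some S \<Rightarrow>
     if b \<notin> S then Some (insert b S)
     else if (\<exists>j. 1 \<le> j \<and> j \<le> k \<and> j < b \<and> b - j \<notin> S)
       then Some (insert (b - (LEAST j. 1 \<le> j \<and> j \<le> k \<and> j < b \<and> b - j \<notin> S)) S)
     else if (\<exists>s. b < s \<and> s \<le> n \<and> s \<notin> S)
       then Some (insert (LEAST s. b < s \<and> s \<le> n \<and> s \<notin> S) S)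
     else None)"

definition naples_park :: "nat \<Rightarrow> nat \<Rightarrow> nat list \<Rightarrow> nat set option" where
  "naples_park n k bs = fold (naples_step n k) bs (Some {})"

definition PF :: "nat \<Rightarrow> nat \<Rightarrow> nat list set" where
  "PF n k = {bs \<in> PP n. naples_park n k bs \<noteq> None}"

end

theory Submission
  imports Defs
begin

text \<open>A car whose look-back range reaches spot 1 parks as long as any spot is free. With
 k = n - 1 this holds for every car, so no car fails under the (n-1)-rule. The k- and
 (k+1)-rules act differently on a car only if its preferred spot b and the k spots west of
 it are all occupied. For k = n - 2 this forces b = n and at least n - 1 occupied spots,
 so under the (n-2)-rule only the last car can fail, and only if it prefers spot n.\<close>

lemma naples_step_parks:
  assumes "S \<subseteq> {1..n}" "card S < n" "b \<in> {1..n}" "b \<le> Suc k"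
  shows "\<exists>s \<in> {1..n} - S. naples_step n k b (Some S) = Some (insert s S)"
proof (cases "b \<in> S")
  case False
  then show ?thesis using assms(3) by (auto simp: naples_step_def)
next
  case bS: True
  show ?thesis
  proof (cases "\<exists>j. 1 \<le> j \<and> j \<le> k \<and> j < b \<and> b - j \<notin> S")
    case True
    define m where "m = (LEAST j. 1 \<le> j \<and> j \<le> k \<and> j < b \<and> b - j \<notin> S)"
    have "1 \<le> m \<and> m \<le> k \<and> m < b \<and> b - m \<notin> S"
      unfolding m_def using True by (rule LeastI_ex)
    moreover have step: "naples_step n k b (Some S) = Some (insert (b - m) S)"
      unfolding naples_step_def m_def using bS True by simp
    ultimately have "b - m \<in> {1..n} - S" using assms(3) by auto
    with step show ?thesis by blast
  next
    case no_west: False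
    have "\<not> {1..n} \<subseteq> S"
    proof
      assume "{1..n} \<subseteq> S"
      then have "card {1..n} \<le> card S"
        using assms(1) by (intro card_mono) (auto intro: finite_subset)
      then show False using assms(2) by simp
    qed
    then obtain t where t: "t \<in> {1..n}" "t \<notin> S" by blast
    have "\<not> t < b"
    proof
      assume "t < b"
      then have "1 \<le> b - t \<and> b - t \<le> k \<and> b - t < b \<and> b - (b - t) \<notin> S"
        using t assms(4) by auto
      then show False using no_west by blast
    qed
    then have "b < t" using t bS by (cases "t = b") auto
    then have east: "\<exists>s. b < s \<and> s \<le> n \<and> s \<notin> S" using t by auto
    define m where "m = (LEAST s. b < s \<and> s \<le> n \<and> s \<notin> S)"
    have "b < m \<and> m \<le> n \<and> m \<notin> S" unfolding m_def using east by (rule LeastI_ex)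
    moreover have "naples_step n k b (Some S) = Some (insert m S)"
      unfolding naples_step_def m_def using bS no_west east by auto
    ultimately show ?thesis using assms(3) by auto
  qed
qed

lemma naples_step_Suc_eq:
  assumes "b \<notin> S \<or> b \<le> Suc k \<or> \<not> {b - k..<b} \<subseteq> S"
  shows "naples_step n (Suc k) b (Some S) = naples_step n k b (Some S)"
proof -
  define west where "west = (\<lambda>k j. 1 \<le> j \<and> j \<le> k \<and> j < b \<and> b - j \<notin> S)"
  have "b \<notin> S \<or> ((\<exists>j. west (Suc k) j) = (\<exists>j. west k j) \<and> Least (west (Suc k)) = Least (west k))"
  proof (cases "b \<le> Suc k")
    case True
    then have "west (Suc k) = west k" by (auto simp: west_def)
    then show ?thesis by simp
  next
    case far: False
    show ?thesis
    proof (cases "{b - k..<b} \<subseteq> S")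
      case True
      then show ?thesis using assms far by simp
    next
      case False
      then obtain x where x: "b - k \<le> x" "x < b" "x \<notin> S" by (meson atLeastLessThan_iff subsetI)
      then have wk: "west k (b - x)" using far by (auto simp: west_def)
      then have wSk: "west (Suc k) (b - x)" by (simp add: west_def)
      then have "Least (west (Suc k)) \<le> b - x" by (rule Least_le)
      moreover have "west (Suc k) (Least (west (Suc k)))" using wSk by (rule LeastI)
      ultimately have "west k (Least (west (Suc k)))"
        using x by (auto simp: west_def)
      then have "Least (west k) = Least (west (Suc k))"
        by (intro Least_equality) (auto simp: west_def intro!: Least_le)
      then show ?thesis using wk by (auto simp: west_def)
    qed
  qed
  then show ?thesis unfolding naples_step_def west_def by auto
qed

lemma fold_naples_step_None_last:
  assumes "n \<ge> 2"
  shows "S \<subseteq> {1..n} \<Longrightarrow> card S + length xs \<le> n \<Longrightarrow> set xs \<subseteq> {1..n}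
    \<Longrightarrow> fold (naples_step n (n - 2)) xs (Some S) = None \<Longrightarrow> xs \<noteq> [] \<and> last xs = n"
proof (induction xs arbitrary: S)
  case Nil
  then show ?case by simp
next
  case (Cons b xs)
  have b: "b \<in> {1..n}" using Cons.prems(3) by simp
  show ?case
  proof (cases "b \<in> S \<and> Suc (n - 2) < b \<and> {b - (n - 2)..<b} \<subseteq> S")
    case True
    then have "b = n" using b assms by auto
    moreover have "n - (n - 2) = 2" using assms by simp
    ultimately have "{2..n} \<subseteq> S" using True by (auto simp: le_less)
    then have "card {2..n} \<le> card S"
      using Cons.prems(1) by (intro card_mono) (auto intro: finite_subset)
    then have "n - 1 \<le> card S" by simp
    moreover have "card S + Suc (length xs) \<le> n" using Cons.prems(2) by simp
    ultimately have "length xs = 0" by arith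
    then have "xs = []" by simp
    then show ?thesis using \<open>b = n\<close> by simp
  next
    case False
    have "naples_step n (Suc (n - 2)) b (Some S) = naples_step n (n - 2) b (Some S)"
      using False not_less by (intro naples_step_Suc_eq) blast
    moreover have "Suc (n - 2) = n - 1" using assms by simp
    ultimately have same_step: "naples_step n (n - 2) b (Some S) = naples_step n (n - 1) b (Some S)"
      by simp
    have "card S < n" and "b \<le> Suc (n - 1)" using Cons.prems(2) b by auto
    then obtain s where s: "s \<in> {1..n} - S" "naples_step n (n - 1) b (Some S) = Some (insert s S)"
      using naples_step_parks[OF Cons.prems(1) _ b] by blast
    have "card (insert s S) = Suc (card S)"
      using s(1) Cons.prems(1) by (simp add: finite_subset)
    then have "xs \<noteq> [] \<and> last xs = n"
      using Cons.IH[of "insert s S"] Cons.prems s same_step by auto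
    then show ?thesis by simp
  qed
qed

theorem lemma2p2:
  fixes n :: nat and bs :: "nat list"
  assumes "n \<ge> 2"
    and "bs \<in> PF n (n - 1) - PF n (n - 2)"
  shows "bs ! (n - 1) = n"
proof -
  have "bs \<in> PP n" and fails: "naples_park n (n - 2) bs = None"
    using assms(2) by (auto simp: PF_def)
  then have len: "length bs = n" and "set bs \<subseteq> {1..n}" by (auto simp: PP_def)
  then have "bs \<noteq> [] \<and> last bs = n"
    using fold_naples_step_None_last[OF assms(1), of "{}" bs] fails by (simp add: naples_park_def)
  then show ?thesis using len by (metis last_conv_nth)
qed

end
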